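(* Let $f:\mathbb{R}\to\mathbb{C}$ be a Lebesgue measurable function which is not zero almost everywhere, and suppose that for every $c>0$, \[ \lim_{x\to\infty} |f(x)|\, e^{c x\log x}=0 . \] Then the system $\mathcal G(f,\mathbb{R}^2)=\{M_aT_bf: a,b\in\mathbb{R}\}$ of time-frequency translates of $f$ is linearly independent.
   Context: For $a,b\in\mathbb{R}$, $M_aT_bf(x)=e^{2\pi i a x}f(x-b)$. For $\Lambda\subset\mathbb{R}^2$, $\mathcal G(f,\Lambda)=\{M_aT_bf:(a,b)\in\Lambda\}$. Measurable functions equal almost everywhere are identified. $\mathcal G(f,\Lambda)$ is called linearly independent if for every finite set $F\subset\Lambda$ and complex coefficients $c_{(a,b)}$, $(a,b)\in F$, not all zero, the function $\sum_{(a,b)\in F}c_{(a,b)}M_aT_bf$ is not zero almost everywhere. *)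

theory Defs
  imports "HOL-Analysis.Analysis"
begin

definition MT :: "real \<Rightarrow> real \<Rightarrow> (real \<Rightarrow> complex) \<Rightarrow> real \<Rightarrow> complex" where
  "MT a b f x = exp (2 * pi * \<i> * complex_of_real (a * x)) * f (x - b)"

definition gabor_lin_indep :: "(real \<Rightarrow> complex) \<Rightarrow> (real \<times> real) set \<Rightarrow> bool" where
  "gabor_lin_indep f \<Lambda> \<longleftrightarrow>
     (\<forall>F c. finite F \<and> F \<subseteq> \<Lambda> \<and> (\<exists>p\<in>F. c p \<noteq> (0::complex)) \<longrightarrow>
        \<not> (AE x in lebesgue. (\<Sum>p\<in>F. c p * MT (fst p) (snd p) f x) = 0))"

end

theory Submission
  imports Defs "HOL-Real_Asymp.Real_Asymp"
begin

text \<open>Suppose a nontrivial finite combination of time-frequency shifts of \<open>f\<close> vanishes almost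
  everywhere.  Evaluating it at \<open>\<beta> + v\<close>, where \<open>\<beta>\<close> is the largest time shift, expresses
  \<open>P v * f v\<close>, with \<open>P\<close> a nonzero trigonometric polynomial with distinct frequencies, through
  the values \<open>f (v + d)\<close> for finitely many shifts \<open>d > 0\<close>.  Such a \<open>P\<close> obeys a sublevel
  estimate: in a unit interval, \<open>norm (P y) < \<epsilon>\<close> holds on a set of measure at most
  \<open>C * \<epsilon> powr \<alpha>\<close> (induction on the number of terms, passing to the derivative).  Hence for
  almost every \<open>y\<close> there are infinitely many \<open>m\<close> with \<open>norm (P (y + l)) \<ge> m powr -K\<close> for all
  combinations \<open>l\<close> of the shifts with coefficients at most \<open>m\<close>.  Iterating the recurrence
  \<open>m\<close> times along these points bounds \<open>norm (f y)\<close> by \<open>(A * m powr K) ^ m\<close> times values of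
  \<open>f\<close> beyond \<open>y + m * min d\<close>, and the decay \<open>exp (- c * x * ln x)\<close> beats this growth.\<close>

definition trig_poly :: "'i set \<Rightarrow> ('i \<Rightarrow> real) \<Rightarrow> ('i \<Rightarrow> complex) \<Rightarrow> real \<Rightarrow> complex" where
  "trig_poly I w c y = (\<Sum>i\<in>I. c i * exp (\<i> * complex_of_real (w i * y)))"

lemma has_vector_derivative_cis_linear:
  "((\<lambda>y. exp (\<i> * complex_of_real (w * y))) has_vector_derivative
      (\<i> * complex_of_real w * exp (\<i> * complex_of_real (w * y)))) (at y within S)"
proof -
  have "((\<lambda>z. exp (\<i> * complex_of_real w * z)) has_field_derivative
      (\<i> * complex_of_real w * exp (\<i> * complex_of_real w * complex_of_real y))) (at (complex_of_real y))"
    by (auto intro!: derivative_eq_intros)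
  from has_vector_derivative_real_field[OF this, of S] show ?thesis
    by (simp add: mult.assoc)
qed

lemma trig_poly_has_vector_derivative:
  "(trig_poly I w c has_vector_derivative
      trig_poly I w (\<lambda>i. c i * \<i> * complex_of_real (w i)) y) (at y within S)"
  unfolding trig_poly_def
  by (rule has_vector_derivative_sum)
     (use has_vector_derivative_mult_right[OF has_vector_derivative_cis_linear] in
       \<open>simp add: mult.assoc\<close>)

lemma continuous_on_trig_poly: "continuous_on S (trig_poly I w c)"
  unfolding trig_poly_def by (intro continuous_intros)

lemma norm_trig_poly_le: "norm (trig_poly I w c y) \<le> (\<Sum>i\<in>I. norm (c i))"
  unfolding trig_poly_def
  by (rule order_trans[OF norm_sum]) (simp add: norm_mult)

lemma trig_poly_factor_out:
  assumes "finite I" "j \<in> I"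
  shows "trig_poly I w c y = exp (\<i> * complex_of_real (w j * y)) *
           (c j + trig_poly (I - {j}) (\<lambda>i. w i - w j) c y)"
proof -
  let ?e = "\<lambda>v. exp (\<i> * complex_of_real (v * y))"
  have termwise: "c i * ?e (w i) = ?e (w j) * (c i * ?e (w i - w j))" for i
  proof -
    have "?e (w i) = ?e (w j) * ?e (w i - w j)"
      by (simp add: exp_add[symmetric] algebra_simps)
    then show ?thesis by (simp add: mult_ac)
  qed
  have "trig_poly I w c y = c j * ?e (w j) + (\<Sum>i\<in>I - {j}. c i * ?e (w i))"
    unfolding trig_poly_def by (rule sum.remove[OF assms])
  also have "(\<Sum>i\<in>I - {j}. c i * ?e (w i)) = ?e (w j) * trig_poly (I - {j}) (\<lambda>i. w i - w j) c y"
    unfolding trig_poly_def sum_distrib_left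
    by (rule sum.cong[OF refl termwise])
  finally show ?thesis by (simp add: algebra_simps)
qed

lemma norm_diff_le_of_vector_derivative_bound:
  fixes f :: "real \<Rightarrow> 'b::real_normed_vector"
  assumes "\<And>t. t \<in> {a..b} \<Longrightarrow> (f has_vector_derivative f' t) (at t)"
    and "\<And>t. t \<in> {a..b} \<Longrightarrow> norm (f' t) \<le> B"
    and "x \<in> {a..b}" "y \<in> {a..b}"
  shows "norm (f x - f y) \<le> B * \<bar>x - y\<bar>"
proof -
  have "norm (f x - f y) \<le> B * norm (x - y)"
  proof (rule differentiable_bound[where S="{a..b}" and f'="\<lambda>t h. h *\<^sub>R f' t"])
    fix t assume t: "t \<in> {a..b}"
    show "(f has_derivative (\<lambda>h. h *\<^sub>R f' t)) (at t within {a..b})"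
      using assms(1)[OF t] unfolding has_vector_derivative_def
      by (rule has_derivative_at_withinI)
    show "onorm (\<lambda>h::real. h *\<^sub>R f' t) \<le> B"
      using assms(2)[OF t] by (intro onorm_le) (simp add: mult.commute[of B] mult_left_mono)
  qed (use assms in auto)
  then show ?thesis by simp
qed

text \<open>Near a point where the derivative is at least \<open>\<delta>\<close>, the function moves at speed
  about \<open>\<delta>\<close>, so it can stay below \<open>\<epsilon>\<close> only on a set of diameter \<open>O(\<epsilon>/\<delta>)\<close>.\<close>
lemma dist_le_of_small_values_large_derivative:
  fixes Q Q' Q'' :: "real \<Rightarrow> 'b::real_normed_vector"
  assumes Q': "\<And>t. (Q has_vector_derivative Q' t) (at t)"
    and Q'': "\<And>t. (Q' has_vector_derivative Q'' t) (at t)"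
    and bound: "\<And>t. norm (Q'' t) \<le> \<Lambda>" and "\<Lambda> > 0" and "\<delta> > 0"
    and large: "\<delta> \<le> norm (Q' y0)" and near: "\<bar>y - y0\<bar> \<le> \<delta> / (2 * \<Lambda>)"
    and small: "norm (Q y) < \<epsilon>" "norm (Q y0) < \<epsilon>"
  shows "\<bar>y - y0\<bar> \<le> 4 * \<epsilon> / \<delta>"
proof -
  let ?S = "{min y y0..max y y0}"
  have Q'_close: "norm (Q' t - Q' y0) \<le> \<delta> / 2" if "t \<in> ?S" for t
  proof -
    have "norm (Q' t - Q' y0) \<le> \<Lambda> * \<bar>t - y0\<bar>"
      by (rule norm_diff_le_of_vector_derivative_bound[OF Q'' bound that]) auto
    also have "\<dots> \<le> \<Lambda> * (\<delta> / (2 * \<Lambda>))"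
      using that near \<open>\<Lambda> > 0\<close> by (intro mult_left_mono) auto
    finally show ?thesis using \<open>\<Lambda> > 0\<close> by simp
  qed
  have "norm (Q y - Q y0 - (y - y0) *\<^sub>R Q' y0) \<le> norm (y - y0) * (\<delta> / 2)"
    by (rule vector_differentiable_bound_linearization[where S="?S"])
       (use Q' Q'_close in \<open>auto simp: closed_segment_eq_real_ivl intro: has_vector_derivative_at_within\<close>)
  then have "norm (Q y - Q y0 - (y - y0) *\<^sub>R Q' y0) \<le> \<bar>y - y0\<bar> * (\<delta> / 2)"
    by simp
  moreover have "\<bar>y - y0\<bar> * \<delta> \<le> norm ((y - y0) *\<^sub>R Q' y0)"
    using large by (simp add: mult_left_mono)
  moreover have "norm (Q y - Q y0) < 2 * \<epsilon>"
    using small norm_triangle_ineq4[of "Q y" "Q y0"] by linarith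
  moreover have "norm ((y - y0) *\<^sub>R Q' y0)
      \<le> norm (Q y - Q y0) + norm (Q y - Q y0 - (y - y0) *\<^sub>R Q' y0)"
    using norm_triangle_ineq4[of "Q y - Q y0" "Q y - Q y0 - (y - y0) *\<^sub>R Q' y0"] by simp
  ultimately have "\<bar>y - y0\<bar> * \<delta> \<le> 4 * \<epsilon>"
    by linarith
  then show ?thesis using \<open>\<delta> > 0\<close> by (simp add: pos_le_divide_eq)
qed

lemma sets_lborel_norm_less:
  fixes g :: "real \<Rightarrow> 'b::real_normed_vector"
  assumes "continuous_on UNIV g" "A \<in> sets lborel"
  shows "{y\<in>A. norm (g y) < e} \<in> sets lborel"
  using borel_measurable_continuous_onI[OF assms(1)] assms(2) unfolding sets_lborel by measurable

lemma sets_lborel_norm_ge: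
  fixes g :: "real \<Rightarrow> 'b::real_normed_vector"
  assumes "continuous_on UNIV g" "A \<in> sets lborel"
  shows "{y\<in>A. e \<le> norm (g y)} \<in> sets lborel"
  using borel_measurable_continuous_onI[OF assms(1)] assms(2) unfolding sets_lborel by measurable

lemma measure_le_of_subset_interval:
  fixes S :: "real set"
  assumes "S \<subseteq> {l..u}" "S \<in> sets lborel" "l \<le> u"
  shows "measure lborel S \<le> u - l"
proof -
  have "measure lborel S \<le> measure lborel {l..u}"
    by (rule measure_mono_fmeasurable) (use assms in \<open>auto simp: fmeasurable_compact\<close>)
  then show ?thesis using assms(3) by simp
qed

lemma measure_le_of_diameter_le:
  fixes S :: "real set"
  assumes "S \<in> sets lborel" "\<And>x y. x \<in> S \<Longrightarrow> y \<in> S \<Longrightarrow> \<bar>x - y\<bar> \<le> r" "0 \<le> r"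
  shows "measure lborel S \<le> 2 * r"
proof (cases "S = {}")
  case True
  then show ?thesis using \<open>0 \<le> r\<close> by simp
next
  case False
  then obtain x0 where "x0 \<in> S" by blast
  then have "S \<subseteq> {x0 - r..x0 + r}" using assms(2) by (force simp: abs_le_iff)
  then have "measure lborel S \<le> (x0 + r) - (x0 - r)"
    using assms(1,3) by (intro measure_le_of_subset_interval) auto
  then show ?thesis by simp
qed

lemma measure_le_of_pieces:
  fixes S :: "real set"
  assumes "S \<subseteq> {a..a+1}" "S \<in> sets lborel" "\<rho> > 0"
    and pieces: "\<And>k::nat. measure lborel (S \<inter> {a + real k * \<rho> .. a + (real k + 1) * \<rho>}) \<le> m"
  shows "measure lborel S \<le> (1 / \<rho> + 2) * m"
proof -
  define M where "M = nat \<lceil>1 / \<rho>\<rceil> + 1"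
  define piece where "piece k = S \<inter> {a + real k * \<rho> .. a + (real k + 1) * \<rho>}" for k
  have "S \<subseteq> (\<Union>k<M. piece k)"
  proof
    fix y assume y: "y \<in> S"
    define k where "k = nat \<lfloor>(y - a) / \<rho>\<rfloor>"
    have ya: "0 \<le> y - a" "y - a \<le> 1" using y assms(1) by auto
    have "0 \<le> \<lfloor>(y - a) / \<rho>\<rfloor>" using ya \<open>\<rho> > 0\<close> by simp
    then have "real k \<le> (y - a) / \<rho>" "(y - a) / \<rho> < real k + 1"
      unfolding k_def by linarith+
    then have "y \<in> piece k" using y \<open>\<rho> > 0\<close> unfolding piece_def by (simp add: field_simps)
    moreover have "k < M"
    proof -
      have "(y - a) / \<rho> \<le> 1 / \<rho>" using ya \<open>\<rho> > 0\<close> by (simp add: divide_right_mono)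
      then show ?thesis unfolding k_def M_def by linarith
    qed
    ultimately show "y \<in> (\<Union>k<M. piece k)" by blast
  qed
  then have "S = (\<Union>k<M. piece k)" unfolding piece_def by blast
  then have "measure lborel S \<le> (\<Sum>k<M. measure lborel (piece k))"
    using measure_UNION_le[of "{..<M}" piece lborel] assms(2) unfolding piece_def by auto
  also have "\<dots> \<le> real M * m"
    using sum_mono[of "{..<M}" "\<lambda>k. measure lborel (piece k)" "\<lambda>_. m"] pieces
    unfolding piece_def by simp
  also have "\<dots> \<le> (1 / \<rho> + 2) * m"
  proof (rule mult_right_mono)
    show "0 \<le> m" using pieces[of 0] measure_nonneg[of lborel] by (meson order_trans)
    show "real M \<le> 1 / \<rho> + 2"
      unfolding M_def using \<open>\<rho> > 0\<close> by (simp add: of_nat_nat) linarith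
  qed
  finally show ?thesis .
qed

definition sublevel_estimate :: "(real \<Rightarrow> complex) \<Rightarrow> real \<Rightarrow> real \<Rightarrow> bool" where
  "sublevel_estimate g C \<alpha> \<longleftrightarrow>
     (\<forall>a \<epsilon>. 0 < \<epsilon> \<longrightarrow> \<epsilon> \<le> 1 \<longrightarrow> measure lborel {y\<in>{a..a+1}. norm (g y) < \<epsilon>} \<le> C * \<epsilon> powr \<alpha>)"

lemma sublevel_estimate_const_norm:
  assumes "\<And>y. norm (g y) = r" "r > 0"
  shows "sublevel_estimate g (1 / r) 1"
  unfolding sublevel_estimate_def
proof (intro allI impI)
  fix a \<epsilon> :: real assume "0 < \<epsilon>" "\<epsilon> \<le> 1"
  show "measure lborel {y\<in>{a..a+1}. norm (g y) < \<epsilon>} \<le> 1 / r * \<epsilon> powr 1"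
  proof (cases "\<epsilon> \<le> r")
    case True
    then have empty: "{y\<in>{a..a+1}. norm (g y) < \<epsilon>} = {}" using assms(1) by auto
    show ?thesis unfolding empty using \<open>0 < \<epsilon>\<close> \<open>r > 0\<close> by simp
  next
    case False
    have "measure lborel {y\<in>{a..a+1}. norm (g y) < \<epsilon>} \<le> (a + 1) - a"
      by (rule measure_le_of_subset_interval) (use assms(1) in auto)
    also have "\<dots> \<le> 1 / r * \<epsilon> powr 1" using False \<open>0 < \<epsilon>\<close> \<open>r > 0\<close> by simp
    finally show ?thesis .
  qed
qed

lemma measure_small_with_large_derivative:
  fixes Q Q' Q'' :: "real \<Rightarrow> complex"
  assumes Q': "\<And>t. (Q has_vector_derivative Q' t) (at t)"
    and Q'': "\<And>t. (Q' has_vector_derivative Q'' t) (at t)"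
    and bound: "\<And>t. norm (Q'' t) \<le> \<Lambda>" and "\<Lambda> > 0" and "\<delta> > 0" and "\<epsilon> > 0"
  shows "measure lborel {y\<in>{a..a+1}. norm (Q y) < \<epsilon> \<and> \<delta> \<le> norm (Q' y)}
           \<le> (2 * \<Lambda> / \<delta> + 2) * (8 * \<epsilon> / \<delta>)"
proof -
  let ?G = "{y\<in>{a..a+1}. norm (Q y) < \<epsilon> \<and> \<delta> \<le> norm (Q' y)}"
  define \<rho> where "\<rho> = \<delta> / (2 * \<Lambda>)"
  have "\<rho> > 0" unfolding \<rho>_def using assms by simp
  have cont: "continuous_on UNIV Q" "continuous_on UNIV Q'"
    using Q' Q'' by (auto intro!: continuous_at_imp_continuous_on has_vector_derivative_continuous)
  have G_eq: "?G = {y\<in>{y\<in>{a..a+1}. norm (Q y) < \<epsilon>}. \<delta> \<le> norm (Q' y)}" by auto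
  have sets_G: "?G \<in> sets lborel"
    unfolding G_eq by (intro sets_lborel_norm_ge sets_lborel_norm_less cont) auto
  have "measure lborel ?G \<le> (1 / \<rho> + 2) * (8 * \<epsilon> / \<delta>)"
  proof (rule measure_le_of_pieces[OF _ sets_G \<open>\<rho> > 0\<close>])
    show "?G \<subseteq> {a..a+1}" by blast
  next
    fix k :: nat
    let ?T = "?G \<inter> {a + real k * \<rho> .. a + (real k + 1) * \<rho>}"
    have diam: "\<bar>y - y0\<bar> \<le> 4 * \<epsilon> / \<delta>" if "y \<in> ?T" "y0 \<in> ?T" for y y0
    proof -
      have "(real k + 1) * \<rho> = real k * \<rho> + \<rho>" by (simp add: algebra_simps)
      then have "\<bar>y - y0\<bar> \<le> \<rho>" using that by (simp add: abs_le_iff)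
      then show ?thesis
        using dist_le_of_small_values_large_derivative[OF Q' Q'' bound \<open>\<Lambda> > 0\<close> \<open>\<delta> > 0\<close>] that
        unfolding \<rho>_def by auto
    qed
    have "?T \<in> sets lborel" using sets_G by (rule sets.Int) simp
    then have "measure lborel ?T \<le> 2 * (4 * \<epsilon> / \<delta>)"
      by (rule measure_le_of_diameter_le[OF _ diam]) (use \<open>\<delta> > 0\<close> \<open>\<epsilon> > 0\<close> in auto)
    then show "measure lborel ?T \<le> 8 * \<epsilon> / \<delta>" by simp
  qed
  moreover have "1 / \<rho> = 2 * \<Lambda> / \<delta>" unfolding \<rho>_def by simp
  ultimately show ?thesis by (simp only:)
qed

text \<open>The exponent drops from \<open>\<alpha>\<close> to \<open>min \<alpha> 1 / 3\<close> because \<open>Q\<close> is small either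
  where \<open>norm (Q' y) < \<delta>\<close> for \<open>\<delta> = \<epsilon> powr (1/3)\<close>, or on a set of measure \<open>O(\<epsilon> / \<delta>\<^sup>2) = O(\<delta>)\<close>.\<close>
lemma sublevel_estimate_from_derivative:
  fixes Q Q' Q'' :: "real \<Rightarrow> complex"
  assumes Q': "\<And>t. (Q has_vector_derivative Q' t) (at t)"
    and Q'': "\<And>t. (Q' has_vector_derivative Q'' t) (at t)"
    and bound: "\<And>t. norm (Q'' t) \<le> \<Lambda>" and "\<Lambda> > 0"
    and est: "sublevel_estimate Q' C \<alpha>" and "0 < \<alpha>" "0 \<le> C"
  shows "sublevel_estimate Q (C + 16 * \<Lambda> + 16) (min \<alpha> 1 / 3)"
  unfolding sublevel_estimate_def
proof (intro allI impI)
  fix a \<epsilon> :: real assume "0 < \<epsilon>" "\<epsilon> \<le> 1"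
  define \<delta> where "\<delta> = \<epsilon> powr (1/3)"
  have \<delta>: "0 < \<delta>" "\<delta> \<le> 1" unfolding \<delta>_def using \<open>0 < \<epsilon>\<close> \<open>\<epsilon> \<le> 1\<close> by (auto simp: powr_le1)
  have \<epsilon>_eq: "\<epsilon> = \<delta> ^ 3"
    unfolding \<delta>_def using \<open>0 < \<epsilon>\<close> by (simp add: powr_realpow[symmetric] powr_powr)
  let ?S = "{y\<in>{a..a+1}. norm (Q y) < \<epsilon>}"
  let ?S1 = "{y\<in>{a..a+1}. norm (Q' y) < \<delta>}"
  let ?G = "{y\<in>{a..a+1}. norm (Q y) < \<epsilon> \<and> \<delta> \<le> norm (Q' y)}"
  have cont: "continuous_on UNIV Q" "continuous_on UNIV Q'"
    using Q' Q'' by (auto intro!: continuous_at_imp_continuous_on has_vector_derivative_continuous)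
  have sets_S: "?S \<in> sets lborel" and sets_S1: "?S1 \<in> sets lborel"
    by (intro sets_lborel_norm_less cont; simp)+
  have G_eq: "?G = {y\<in>?S. \<delta> \<le> norm (Q' y)}" by auto
  have sets_G: "?G \<in> sets lborel"
    unfolding G_eq by (rule sets_lborel_norm_ge[OF cont(2) sets_S])
  have fmeas: "?S1 \<union> ?G \<in> fmeasurable lborel"
    using sets.Un[OF sets_S1 sets_G]
    by (intro fmeasurableI2[OF fmeasurable_compact[OF compact_Icc]]) blast+
  have "measure lborel ?S \<le> measure lborel (?S1 \<union> ?G)"
    by (rule measure_mono_fmeasurable[OF _ sets_S fmeas]) (auto simp: not_less)
  also have "\<dots> \<le> measure lborel ?S1 + measure lborel ?G"
    by (rule measure_Un_le[OF sets_S1 sets_G])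
  finally have "measure lborel ?S \<le> measure lborel ?S1 + measure lborel ?G" .
  moreover have "measure lborel ?S1 \<le> C * \<delta> powr \<alpha>"
    using est \<delta> unfolding sublevel_estimate_def by blast
  moreover have "measure lborel ?G \<le> (2 * \<Lambda> / \<delta> + 2) * (8 * \<epsilon> / \<delta>)"
    by (rule measure_small_with_large_derivative[OF Q' Q'' bound]) (use assms \<delta> \<open>0 < \<epsilon>\<close> in auto)
  moreover have "(2 * \<Lambda> / \<delta> + 2) * (8 * \<epsilon> / \<delta>) = 16 * \<Lambda> * \<delta> + 16 * \<delta>\<^sup>2"
    using \<delta> unfolding \<epsilon>_eq by (simp add: field_simps power2_eq_square power3_eq_cube)
  moreover have "16 * \<delta>\<^sup>2 \<le> 16 * \<delta>"
    using \<delta> by (simp add: power2_eq_square mult_left_le)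
  moreover have "C * \<delta> powr \<alpha> \<le> C * \<epsilon> powr (min \<alpha> 1 / 3)"
    unfolding \<delta>_def using \<open>0 < \<epsilon>\<close> \<open>\<epsilon> \<le> 1\<close> \<open>0 < \<alpha>\<close> \<open>0 \<le> C\<close>
    by (simp add: powr_powr) (intro mult_left_mono powr_mono', auto)
  moreover have "(16 * \<Lambda> + 16) * \<delta> \<le> (16 * \<Lambda> + 16) * \<epsilon> powr (min \<alpha> 1 / 3)"
    unfolding \<delta>_def using \<open>0 < \<epsilon>\<close> \<open>\<epsilon> \<le> 1\<close> \<open>\<Lambda> > 0\<close>
    by (intro mult_left_mono powr_mono') auto
  ultimately show "measure lborel ?S \<le> (C + 16 * \<Lambda> + 16) * \<epsilon> powr (min \<alpha> 1 / 3)"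
    by (simp only: distrib_right)
qed

lemma trig_poly_sublevel_estimate:
  assumes "finite I" "I \<noteq> {}" "inj_on w I" "\<forall>i\<in>I. c i \<noteq> 0"
  shows "\<exists>C \<alpha>. 0 < \<alpha> \<and> 0 \<le> C \<and> sublevel_estimate (trig_poly I w c) C \<alpha>"
  using assms
proof (induction "card I" arbitrary: I w c rule: less_induct)
  case less
  obtain j where j: "j \<in> I" using less.prems by auto
  show ?case
  proof (cases "I = {j}")
    case True
    have "norm (trig_poly I w c y) = norm (c j)" for y
      unfolding trig_poly_def True by (simp add: norm_mult)
    then show ?thesis
      using sublevel_estimate_const_norm[of "trig_poly I w c" "norm (c j)"] less.prems j by auto
  next
    case False
    define I' where "I' = I - {j}"
    define v where "v i = w i - w j" for i
    define c' where "c' i = c i * \<i> * complex_of_real (v i)" for i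
    define c'' where "c'' i = c' i * \<i> * complex_of_real (v i)" for i
    define Q where "Q y = c j + trig_poly I' v c y" for y
    define \<Lambda> where "\<Lambda> = (\<Sum>i\<in>I'. norm (c'' i)) + 1"
    have "\<Lambda> > 0" unfolding \<Lambda>_def by (simp add: sum_nonneg add_nonneg_pos)
    have Q': "(Q has_vector_derivative trig_poly I' v c' t) (at t)" for t
      unfolding Q_def c'_def
      using has_vector_derivative_add[OF has_vector_derivative_const trig_poly_has_vector_derivative]
      by simp
    have Q'': "(trig_poly I' v c' has_vector_derivative trig_poly I' v c'' t) (at t)" for t
      unfolding c''_def by (rule trig_poly_has_vector_derivative)
    have bound: "norm (trig_poly I' v c'' t) \<le> \<Lambda>" for t
      unfolding \<Lambda>_def using norm_trig_poly_le[of I' v c'' t] by linarith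
    have "\<forall>i\<in>I'. c' i \<noteq> 0"
      using less.prems(3,4) j unfolding c'_def v_def I'_def inj_on_def by auto
    moreover have "inj_on v I'" using less.prems(3) unfolding inj_on_def v_def I'_def by auto
    moreover have "card I' < card I" "finite I'" "I' \<noteq> {}"
      using less.prems j False unfolding I'_def by (auto simp: card_gt_0_iff)
    ultimately obtain C \<alpha> where "0 < \<alpha>" "0 \<le> C" and est: "sublevel_estimate (trig_poly I' v c') C \<alpha>"
      using less.hyps by blast
    have "sublevel_estimate Q (C + 16 * \<Lambda> + 16) (min \<alpha> 1 / 3)"
      by (rule sublevel_estimate_from_derivative[OF Q' Q'' bound \<open>\<Lambda> > 0\<close> est \<open>0 < \<alpha>\<close> \<open>0 \<le> C\<close>])
    moreover have "norm (trig_poly I w c y) = norm (Q y)" for y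
      unfolding Q_def I'_def v_def trig_poly_factor_out[OF less.prems(1) j, of w c y]
      by (simp add: norm_mult)
    ultimately have "sublevel_estimate (trig_poly I w c) (C + 16 * \<Lambda> + 16) (min \<alpha> 1 / 3)"
      unfolding sublevel_estimate_def by simp
    then show ?thesis
      using \<open>0 < \<alpha>\<close> \<open>0 \<le> C\<close> \<open>\<Lambda> > 0\<close>
      by (intro exI[of _ "C + 16 * \<Lambda> + 16"] exI[of _ "min \<alpha> 1 / 3"]) auto
  qed
qed

definition bounded_combinations :: "real set \<Rightarrow> nat \<Rightarrow> real set" where
  "bounded_combinations D m = (\<lambda>n. \<Sum>d\<in>D. real (n d) * d) ` (D \<rightarrow>\<^sub>E {0..m})"

lemma finite_bounded_combinations: "finite D \<Longrightarrow> finite (bounded_combinations D m)"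
  unfolding bounded_combinations_def by (intro finite_imageI finite_PiE) auto

lemma card_bounded_combinations_le:
  assumes "finite D"
  shows "card (bounded_combinations D m) \<le> Suc m ^ card D"
proof -
  have "card (bounded_combinations D m) \<le> card (D \<rightarrow>\<^sub>E {0..m})"
    unfolding bounded_combinations_def using assms by (intro card_image_le finite_PiE) auto
  also have "\<dots> = Suc m ^ card D" using assms by (simp add: card_PiE)
  finally show ?thesis .
qed

lemma zero_in_bounded_combinations: "0 \<in> bounded_combinations D m"
proof -
  have "(\<lambda>d\<in>D. 0) \<in> D \<rightarrow>\<^sub>E {0..m}" by auto
  moreover have "0 = (\<Sum>d\<in>D. real ((\<lambda>d\<in>D. 0::nat) d) * d)" by simp
  ultimately show ?thesis unfolding bounded_combinations_def by blast
qed

lemma add_in_bounded_combinations: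
  assumes "finite D" "l \<in> bounded_combinations D j" "d \<in> D"
  shows "l + d \<in> bounded_combinations D (Suc j)"
proof -
  from assms(2) obtain n where n: "n \<in> D \<rightarrow>\<^sub>E {0..j}" and l: "l = (\<Sum>e\<in>D. real (n e) * e)"
    unfolding bounded_combinations_def by auto
  define n' where "n' = n(d := Suc (n d))"
  have "n' \<in> D \<rightarrow>\<^sub>E {0..Suc j}"
    using n assms(3) unfolding n'_def by (auto simp: PiE_def Pi_def extensional_def)
  moreover have "l + d = (\<Sum>e\<in>D. real (n' e) * e)"
  proof -
    have "(\<Sum>e\<in>D - {d}. real (n' e) * e) = (\<Sum>e\<in>D - {d}. real (n e) * e)"
      unfolding n'_def by (rule sum.cong) auto
    then show ?thesis
      unfolding l sum.remove[OF assms(1,3)] by (simp add: n'_def algebra_simps)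
  qed
  ultimately show ?thesis unfolding bounded_combinations_def by blast
qed

lemma bounded_combinations_mono: "j \<le> m \<Longrightarrow> bounded_combinations D j \<subseteq> bounded_combinations D m"
  unfolding bounded_combinations_def by (intro image_mono PiE_mono) auto

lemma measure_lborel_vimage_plus:
  fixes S :: "real set"
  assumes "S \<in> sets lborel"
  shows "measure lborel ((+) t -` S) = measure lborel S"
proof -
  have "emeasure lborel S = emeasure (distr lborel borel ((+) t)) S"
    by (simp add: lborel_distr_plus)
  also have "\<dots> = emeasure lborel ((+) t -` S)"
    using assms by (subst emeasure_distr) auto
  finally show ?thesis unfolding measure_def by simp
qed

lemma sublevel_estimate_translate:
  assumes "continuous_on UNIV P" "sublevel_estimate P C \<alpha>"
  shows "sublevel_estimate (\<lambda>y. P (l + y)) C \<alpha>"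
  unfolding sublevel_estimate_def
proof (intro allI impI)
  fix a \<epsilon> :: real assume "0 < \<epsilon>" "\<epsilon> \<le> 1"
  let ?S = "{z\<in>{l + a..(l + a) + 1}. norm (P z) < \<epsilon>}"
  have eq: "{y\<in>{a..a+1}. norm (P (l + y)) < \<epsilon>} = (+) l -` ?S" by auto
  have "?S \<in> sets lborel" by (rule sets_lborel_norm_less[OF assms(1)]) simp
  then have "measure lborel {y\<in>{a..a+1}. norm (P (l + y)) < \<epsilon>} = measure lborel ?S"
    unfolding eq by (rule measure_lborel_vimage_plus)
  also have "\<dots> \<le> C * \<epsilon> powr \<alpha>"
    using assms(2) \<open>0 < \<epsilon>\<close> \<open>\<epsilon> \<le> 1\<close> unfolding sublevel_estimate_def by blast
  finally show "measure lborel {y\<in>{a..a+1}. norm (P (l + y)) < \<epsilon>} \<le> C * \<epsilon> powr \<alpha>" .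
qed

lemma AE_translates:
  fixes P :: "real \<Rightarrow> bool"
  assumes "AE x in lborel. P x" "countable L"
  shows "AE y in lborel. \<forall>l\<in>L. P (l + y)"
proof -
  obtain N where N: "{x\<in>space lborel. \<not> P x} \<subseteq> N" "emeasure lborel N = 0" "N \<in> sets lborel"
    using assms(1) by (rule AE_E)
  then have "N \<in> null_sets lborel" by (intro null_setsI)
  have "AE y in lborel. P (l + y)" for l
    by (rule AE_I'[OF null_sets_translation[OF \<open>N \<in> null_sets lborel\<close>, of "- l"]])
       (use N(1) in \<open>auto simp: add.commute\<close>)
  then show ?thesis using assms(2) by (simp add: AE_ball_countable)
qed

lemma AE_frequently_not_in:
  assumes fmeas: "\<And>m. B m \<in> fmeasurable M" and lim: "(\<lambda>m. measure M (B m)) \<longlonglongrightarrow> 0"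
  shows "AE x in M. \<exists>\<^sub>F m in sequentially. x \<notin> B m"
proof -
  have null: "(\<Inter>m\<in>{N..}. B m) \<in> null_sets M" for N
  proof -
    let ?I = "\<Inter>m\<in>{N..}. B m"
    have fm: "?I \<in> fmeasurable M"
      using fmeas by (intro fmeasurableI2[OF fmeas[of N]] sets.countable_INT) auto
    have "measure M ?I \<le> measure M (B m)" if "N \<le> m" for m
      using that fmeas by (intro measure_mono_fmeasurable) auto
    then have "measure M ?I \<le> 0"
      using lim by (intro tendsto_lowerbound[where F=sequentially]) (auto simp: eventually_sequentially)
    then have "measure M ?I = 0" using measure_nonneg[of M ?I] by linarith
    with fm have "emeasure M ?I = 0" by (simp add: emeasure_eq_measure2)
    then show ?thesis using fm by (auto intro: null_setsI fmeasurableD)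
  qed
  show ?thesis
  proof (rule AE_I'[OF null_sets_UN[OF null]])
    show "{x \<in> space M. \<not> (\<exists>\<^sub>F m in sequentially. x \<notin> B m)} \<subseteq> (\<Union>N. \<Inter>m\<in>{N..}. B m)"
      by (auto simp: not_frequently eventually_sequentially)
  qed
qed

text \<open>The level \<open>m powr -((r + 1) / \<alpha>)\<close> is chosen so that the sublevel estimate, summed over
  the \<open>O(m ^ r)\<close> translates, gives \<open>O(1/m)\<close>.\<close>
lemma measure_translates_sublevel_le:
  fixes P :: "real \<Rightarrow> complex"
  assumes cont: "continuous_on UNIV P" and est: "sublevel_estimate P C \<alpha>"
    and "0 < \<alpha>" "0 \<le> C" "finite L" "card L \<le> Suc m ^ r" "1 \<le> m"
  shows "measure lborel (\<Union>l\<in>L. {y\<in>{a..a+1}. norm (P (l + y)) < real m powr - ((real r + 1) / \<alpha>)})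
           \<le> C * 2 ^ r / real m"
proof -
  define \<theta> where "\<theta> = real m powr - ((real r + 1) / \<alpha>)"
  have cont_l: "continuous_on UNIV (\<lambda>y. P (l + y))" for l
    by (rule continuous_on_compose2[OF cont]) (auto intro: continuous_intros)
  have "\<theta> \<le> real m powr 0"
    unfolding \<theta>_def using \<open>1 \<le> m\<close> \<open>0 < \<alpha>\<close> by (intro powr_mono) auto
  then have "0 < \<theta>" "\<theta> \<le> 1" unfolding \<theta>_def using \<open>1 \<le> m\<close> by auto
  then have "measure lborel (\<Union>l\<in>L. {y\<in>{a..a+1}. norm (P (l + y)) < \<theta>}) \<le> (\<Sum>l\<in>L. C * \<theta> powr \<alpha>)"
    using \<open>finite L\<close> sublevel_estimate_translate[OF cont est]
    by (intro order_trans[OF measure_UNION_le] sum_mono sets_lborel_norm_less cont_l)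
       (auto simp: sublevel_estimate_def)
  also have "\<theta> powr \<alpha> = 1 / real m ^ (r + 1)"
  proof -
    have pow: "real m powr real (r + 1) = real m ^ (r + 1)" using \<open>1 \<le> m\<close> by (intro powr_realpow) auto
    have exponent: "- ((real r + 1) / \<alpha>) * \<alpha> = - real (r + 1)" using \<open>0 < \<alpha>\<close> by simp
    show ?thesis unfolding \<theta>_def powr_powr exponent unfolding powr_minus_divide pow ..
  qed
  also have "(\<Sum>l\<in>L. C * (1 / real m ^ (r + 1))) = real (card L) * (C / real m ^ (r + 1))"
    by simp
  also have "\<dots> \<le> real (Suc m ^ r) * (C / real m ^ (r + 1))"
    using \<open>card L \<le> Suc m ^ r\<close> \<open>0 \<le> C\<close> by (intro mult_right_mono) (auto simp del: of_nat_Suc)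
  also have "\<dots> \<le> (2 * real m) ^ r * (C / real m ^ (r + 1))"
  proof (rule mult_right_mono)
    show "real (Suc m ^ r) \<le> (2 * real m) ^ r"
      unfolding of_nat_power using \<open>1 \<le> m\<close> by (intro power_mono) auto
  qed (use \<open>0 \<le> C\<close> in simp)
  also have "\<dots> = C * 2 ^ r / real m"
    using \<open>1 \<le> m\<close> by (simp add: power_mult_distrib field_simps)
  finally show ?thesis unfolding \<theta>_def .
qed

lemma AE_frequently_large_on_translates:
  fixes P :: "real \<Rightarrow> complex" and L :: "nat \<Rightarrow> real set"
  assumes cont: "continuous_on UNIV P" and est: "sublevel_estimate P C \<alpha>"
    and "0 < \<alpha>" "0 \<le> C"
    and fin: "\<And>m. finite (L m)" and card: "\<And>m. card (L m) \<le> Suc m ^ r"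
  shows "AE y in lborel. y \<in> {a..a+1} \<longrightarrow>
           (\<exists>\<^sub>F m in sequentially. \<forall>l\<in>L m. real m powr - ((real r + 1) / \<alpha>) \<le> norm (P (l + y)))"
proof -
  define bad where
    "bad m = (\<Union>l\<in>L m. {y\<in>{a..a+1}. norm (P (l + y)) < real m powr - ((real r + 1) / \<alpha>)})" for m
  have sets_bad: "bad m \<in> sets lborel" for m
    unfolding bad_def using fin
    by (intro sets.finite_UN sets_lborel_norm_less continuous_on_compose2[OF cont]) (auto intro: continuous_intros)
  have "bad m \<in> fmeasurable lborel" for m
    by (rule fmeasurableI2[OF fmeasurable_compact[OF compact_Icc[of a "a + 1"]] _ sets_bad])
       (auto simp: bad_def)
  moreover have "(\<lambda>m. measure lborel (bad m)) \<longlonglongrightarrow> 0"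
  proof (rule tendsto_sandwich[OF _ _ tendsto_const])
    show "\<forall>\<^sub>F m in sequentially. measure lborel (bad m) \<le> C * 2 ^ r / real m"
      unfolding bad_def eventually_sequentially using assms
      by (intro exI[of _ 1] allI impI measure_translates_sublevel_le) auto
    show "(\<lambda>m. C * 2 ^ r / real m) \<longlonglongrightarrow> 0"
      by (intro tendsto_divide_0[OF tendsto_const] filterlim_at_top_imp_at_infinity
          filterlim_real_sequentially)
  qed simp
  ultimately have "AE y in lborel. \<exists>\<^sub>F m in sequentially. y \<notin> bad m"
    by (rule AE_frequently_not_in)
  then show ?thesis
    by eventually_elim (auto simp: bad_def not_less elim!: frequently_elim1)
qed

lemma iterated_recurrence_bound:
  fixes g :: "real \<Rightarrow> real" and L :: "nat \<Rightarrow> real set"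
  assumes step: "\<And>j l d. l \<in> L j \<Longrightarrow> d \<in> D \<Longrightarrow> l + d \<in> L (Suc j)"
    and mono: "\<And>j. j \<le> m \<Longrightarrow> L j \<subseteq> L m"
    and rec: "\<And>l M. l \<in> L m \<Longrightarrow> 0 \<le> M \<Longrightarrow> (\<forall>d\<in>D. g (l + d) \<le> M) \<Longrightarrow> g l \<le> q * M"
    and "0 \<le> q" "0 \<le> B" and dmin: "\<And>d. d \<in> D \<Longrightarrow> \<delta> \<le> d"
  shows "l \<in> L j \<Longrightarrow> j + k \<le> m \<Longrightarrow> (\<And>z. l + real k * \<delta> \<le> z \<Longrightarrow> g z \<le> B) \<Longrightarrow>
           g l \<le> q ^ k * B"
proof (induction k arbitrary: j l)
  case 0
  then show ?case by simp
next
  case (Suc k)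
  have "g (l + d) \<le> q ^ k * B" if "d \<in> D" for d
  proof (rule Suc.IH)
    show "l + d \<in> L (Suc j)" using step[OF Suc.prems(1) that] .
    show "Suc j + k \<le> m" using Suc.prems(2) by simp
    show "g z \<le> B" if "l + d + real k * \<delta> \<le> z" for z
      using Suc.prems(3) that dmin[OF \<open>d \<in> D\<close>] by (simp add: algebra_simps)
  qed
  moreover have "l \<in> L m" using mono[of j] Suc.prems(1,2) by auto
  ultimately have "g l \<le> q * (q ^ k * B)"
    using rec \<open>0 \<le> q\<close> \<open>0 \<le> B\<close> by simp
  then show ?case by (simp add: mult.assoc)
qed

lemma exp_neg_mult_xlnx_antimono:
  fixes c w z :: real
  assumes "0 \<le> c" "1 \<le> w" "w \<le> z"
  shows "exp (- c * z * ln z) \<le> exp (- c * w * ln w)"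
proof -
  have "w * ln w \<le> z * ln z" using assms by (intro mult_mono) auto
  then show ?thesis using mult_left_mono[OF _ \<open>0 \<le> c\<close>] by (simp add: mult.assoc)
qed

lemma eventually_ge_real_sequentially: "\<forall>\<^sub>F m in sequentially. x \<le> real m"
  using filterlim_real_sequentially unfolding filterlim_at_top by blast

text \<open>For \<open>w \<ge> m * \<delta> / 2\<close> the decay factor is at most \<open>exp (- 2 * (K + 1) * m * ln (m * \<delta> / 2))\<close>,
  which beats the growth \<open>exp (K * m * ln m + O(m))\<close>.\<close>
lemma eventually_growth_times_decay_less:
  fixes A K \<delta> \<eta> :: real
  assumes "A > 0" "K \<ge> 0" "\<delta> > 0" "\<eta> > 0"
  shows "\<forall>\<^sub>F m in sequentially. \<forall>w \<ge> real m * \<delta> / 2.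
           (A * real m powr K) ^ m * exp (- (4 * (K + 1) / \<delta>) * w * ln w) < \<eta>"
proof -
  have "((\<lambda>x. exp (x * (ln A + K * ln x) - 2 * (K + 1) * x * ln (x * \<delta> / 2))) \<longlongrightarrow> 0) at_top"
    using assms by real_asymp
  then have "((\<lambda>m. exp (real m * (ln A + K * ln (real m)) - 2 * (K + 1) * real m * ln (real m * \<delta> / 2)))
      \<longlongrightarrow> 0) sequentially"
    by (rule filterlim_compose[OF _ filterlim_real_sequentially])
  then have "\<forall>\<^sub>F m in sequentially.
      exp (real m * (ln A + K * ln (real m)) - 2 * (K + 1) * real m * ln (real m * \<delta> / 2)) < \<eta>"
    using \<open>\<eta> > 0\<close> by (rule order_tendstoD)
  moreover have "\<forall>\<^sub>F m in sequentially. 2 / \<delta> \<le> real m"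
    by (rule eventually_ge_real_sequentially)
  ultimately show ?thesis
  proof eventually_elim
    case (elim m)
    define c where "c = 4 * (K + 1) / \<delta>"
    define x where "x = real m * \<delta> / 2"
    have "1 \<le> x" unfolding x_def using elim(2) \<open>\<delta> > 0\<close> by (simp add: field_simps)
    then have "m > 0" unfolding x_def by (cases m) auto
    have growth: "(A * real m powr K) ^ m = exp (real m * (ln A + K * ln (real m)))"
    proof -
      have "A * real m powr K = exp (ln A + K * ln (real m))"
        using \<open>A > 0\<close> \<open>m > 0\<close> by (simp add: powr_def exp_add)
      then show ?thesis by (simp add: exp_of_nat_mult)
    qed
    have decay: "c * x * ln x = 2 * (K + 1) * real m * ln x"
      unfolding c_def x_def using \<open>\<delta> > 0\<close> by simp
    have "(A * real m powr K) ^ m * exp (- c * w * ln w) < \<eta>" if "x \<le> w" for w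
    proof -
      have "exp (- c * w * ln w) \<le> exp (- c * x * ln x)"
        using \<open>1 \<le> x\<close> that assms unfolding c_def by (intro exp_neg_mult_xlnx_antimono) auto
      then have "(A * real m powr K) ^ m * exp (- c * w * ln w) \<le>
          (A * real m powr K) ^ m * exp (- c * x * ln x)"
        using \<open>A > 0\<close> by (intro mult_left_mono) auto
      also have "\<dots> = exp (real m * (ln A + K * ln (real m)) - 2 * (K + 1) * real m * ln x)"
        unfolding growth using decay by (simp add: exp_diff exp_minus exp_add field_simps)
      also have "\<dots> < \<eta>" using elim(1) unfolding x_def .
      finally show ?thesis .
    qed
    then show ?case unfolding c_def x_def by blast
  qed
qed

lemma norm_le_of_recurrence_level:
  fixes f P :: "real \<Rightarrow> complex" and L :: "nat \<Rightarrow> real set"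
  assumes step: "\<And>j l d. l \<in> L j \<Longrightarrow> d \<in> D \<Longrightarrow> l + d \<in> L (Suc j)"
    and mono: "\<And>j m. j \<le> m \<Longrightarrow> L j \<subseteq> L m" and "0 \<in> L 0"
    and dmin: "\<And>d. d \<in> D \<Longrightarrow> \<delta> \<le> d" and "0 \<le> A" and "m > 0"
    and rec: "\<forall>l\<in>(\<Union>m. L m). \<forall>M\<ge>0. (\<forall>d\<in>D. norm (f (l + y + d)) \<le> M) \<longrightarrow>
                norm (P (l + y)) * norm (f (l + y)) \<le> A * M"
    and good: "\<And>l. l \<in> L m \<Longrightarrow> real m powr - K \<le> norm (P (l + y))"
    and "0 \<le> B" and tail: "\<And>z. y + real m * \<delta> \<le> z \<Longrightarrow> norm (f z) \<le> B"
  shows "norm (f y) \<le> ((A + 1) * real m powr K) ^ m * B"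
proof -
  have "norm (f (0 + y)) \<le> ((A + 1) * real m powr K) ^ m * B"
  proof (rule iterated_recurrence_bound[where g="\<lambda>z. norm (f (z + y))" and D=D and \<delta>=\<delta>])
    show "l + d \<in> L (Suc j)" if "l \<in> L j" "d \<in> D" for j l d using step that .
    show "L j \<subseteq> L m" if "j \<le> m" for j using mono that .
    show "norm (f (l + y)) \<le> (A + 1) * real m powr K * M"
      if l: "l \<in> L m" and "0 \<le> M" and M: "\<forall>d\<in>D. norm (f (l + d + y)) \<le> M" for l M
    proof -
      have "real m powr - K * norm (f (l + y)) \<le> norm (P (l + y)) * norm (f (l + y))"
        using good[OF l] by (intro mult_right_mono) auto
      also have "\<dots> \<le> (A + 1) * M"
        using rec l \<open>0 \<le> M\<close> M unfolding distrib_right by (force simp: add_ac)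
      finally show ?thesis using \<open>m > 0\<close> by (simp add: powr_minus field_simps)
    qed
  qed (use \<open>0 \<in> L 0\<close> \<open>0 \<le> A\<close> \<open>0 \<le> B\<close> dmin tail in \<open>auto simp: add_ac\<close>)
  then show ?thesis by simp
qed

lemma eq_zero_of_recurrence:
  fixes f P :: "real \<Rightarrow> complex" and L :: "nat \<Rightarrow> real set"
  assumes step: "\<And>j l d. l \<in> L j \<Longrightarrow> d \<in> D \<Longrightarrow> l + d \<in> L (Suc j)"
    and mono: "\<And>j m. j \<le> m \<Longrightarrow> L j \<subseteq> L m" and "0 \<in> L 0"
    and "\<delta> > 0" and dmin: "\<And>d. d \<in> D \<Longrightarrow> \<delta> \<le> d" and "0 \<le> A" "0 \<le> K"
    and rec: "\<forall>l\<in>(\<Union>m. L m). \<forall>M\<ge>0. (\<forall>d\<in>D. norm (f (l + y + d)) \<le> M) \<longrightarrow>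
                norm (P (l + y)) * norm (f (l + y)) \<le> A * M"
    and large: "\<exists>\<^sub>F m in sequentially. \<forall>l\<in>L m. real m powr - K \<le> norm (P (l + y))"
    and decay: "\<forall>\<^sub>F z in at_top. norm (f z) \<le> exp (- (4 * (K + 1) / \<delta>) * z * ln z)"
  shows "f y = 0"
proof (rule ccontr)
  assume "f y \<noteq> 0"
  define c where "c = 4 * (K + 1) / \<delta>"
  obtain Z where Z: "\<And>z. Z \<le> z \<Longrightarrow> norm (f z) \<le> exp (- c * z * ln z)"
    using decay unfolding c_def eventually_at_top_linorder by blast
  have "\<forall>\<^sub>F m in sequentially. \<forall>w \<ge> real m * \<delta> / 2.
      ((A + 1) * real m powr K) ^ m * exp (- c * w * ln w) < norm (f y)"
    unfolding c_def using assms \<open>f y \<noteq> 0\<close> by (intro eventually_growth_times_decay_less) auto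
  moreover have "\<forall>\<^sub>F m in sequentially. 2 * (max Z 1 + \<bar>y\<bar>) / \<delta> \<le> real m"
    by (rule eventually_ge_real_sequentially)
  ultimately have "\<forall>\<^sub>F m in sequentially. (\<forall>w \<ge> real m * \<delta> / 2.
      ((A + 1) * real m powr K) ^ m * exp (- c * w * ln w) < norm (f y)) \<and>
      max Z 1 + \<bar>y\<bar> \<le> real m * \<delta> / 2"
    by eventually_elim (use \<open>\<delta> > 0\<close> in \<open>simp add: field_simps\<close>)
  from frequently_ex[OF frequently_eventually_frequently[OF large this]]
  obtain m where good: "\<And>l. l \<in> L m \<Longrightarrow> real m powr - K \<le> norm (P (l + y))"
      and small: "\<And>w. real m * \<delta> / 2 \<le> w \<Longrightarrow>
        ((A + 1) * real m powr K) ^ m * exp (- c * w * ln w) < norm (f y)"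
      and big: "max Z 1 + \<bar>y\<bar> \<le> real m * \<delta> / 2"
    by blast
  define w where "w = y + real m * \<delta>"
  have "m > 0" using big \<open>\<delta> > 0\<close> by (cases m) auto
  have w: "real m * \<delta> / 2 \<le> w" "Z \<le> w" "1 \<le> w"
    using big abs_ge_minus_self[of y] unfolding w_def by linarith+
  have "norm (f z) \<le> exp (- c * w * ln w)" if "y + real m * \<delta> \<le> z" for z
  proof -
    have "norm (f z) \<le> exp (- c * z * ln z)" using Z w that unfolding w_def by auto
    also have "\<dots> \<le> exp (- c * w * ln w)"
      using that w \<open>\<delta> > 0\<close> \<open>0 \<le> K\<close> unfolding c_def w_def by (intro exp_neg_mult_xlnx_antimono) auto
    finally show ?thesis .
  qed
  then have "norm (f y) \<le> ((A + 1) * real m powr K) ^ m * exp (- c * w * ln w)"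
    by (intro norm_le_of_recurrence_level[OF step mono \<open>0 \<in> L 0\<close> dmin \<open>0 \<le> A\<close> \<open>m > 0\<close> rec good])
       auto
  also have "\<dots> < norm (f y)" by (rule small[OF w(1)])
  finally show False by simp
qed

lemma norm_MT: "norm (MT a b f x) = norm (f (x - b))"
  unfolding MT_def by (simp add: norm_mult)

lemma MT_shift:
  "MT a b f (b + v) =
     exp (2 * pi * \<i> * complex_of_real (a * b)) * exp (\<i> * complex_of_real (2 * pi * a * v)) * f v"
  unfolding MT_def by (simp add: exp_add[symmetric] algebra_simps)

lemma norm_trig_poly_mult_le_of_vanishing_combination:
  fixes f :: "real \<Rightarrow> complex" and c :: "real \<times> real \<Rightarrow> complex"
  assumes "finite F" and zero: "(\<Sum>p\<in>F. c p * MT (fst p) (snd p) f (\<beta> + v)) = 0"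
    and bound: "\<And>p. p \<in> F \<Longrightarrow> snd p \<noteq> \<beta> \<Longrightarrow> norm (f (v + (\<beta> - snd p))) \<le> M"
  shows "norm (trig_poly {p\<in>F. snd p = \<beta>} (\<lambda>p. 2 * pi * fst p)
             (\<lambda>p. c p * exp (2 * pi * \<i> * complex_of_real (fst p * \<beta>))) v) * norm (f v)
           \<le> (\<Sum>p\<in>{p\<in>F. snd p \<noteq> \<beta>}. norm (c p)) * M"
    (is "norm (?P v) * _ \<le> _")
proof -
  let ?t = "\<lambda>p. c p * MT (fst p) (snd p) f (\<beta> + v)"
  have "(\<Sum>p\<in>{p\<in>F. snd p = \<beta>}. ?t p) = ?P v * f v"
    unfolding trig_poly_def sum_distrib_right
    by (intro sum.cong refl) (auto simp: MT_shift mult_ac)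
  moreover have "{p\<in>F. snd p = \<beta>} = F \<inter> {p. snd p = \<beta>}" "{p\<in>F. snd p \<noteq> \<beta>} = F - {p. snd p = \<beta>}"
    by auto
  ultimately have "?P v * f v = - (\<Sum>p\<in>{p\<in>F. snd p \<noteq> \<beta>}. ?t p)"
    using zero sum.Int_Diff[OF \<open>finite F\<close>, of ?t "{p. snd p = \<beta>}"] by (simp add: eq_neg_iff_add_eq_0)
  then have "norm (?P v * f v) \<le> (\<Sum>p\<in>{p\<in>F. snd p \<noteq> \<beta>}. norm (?t p))"
    by (simp only: norm_minus_cancel norm_sum)
  also have "\<dots> \<le> (\<Sum>p\<in>{p\<in>F. snd p \<noteq> \<beta>}. norm (c p) * M)"
    using bound by (intro sum_mono) (auto simp: norm_mult norm_MT mult_left_mono add_diff_eq add.commute)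
  finally show ?thesis by (simp add: norm_mult sum_distrib_right)
qed

lemma gabor_relation_recurrence:
  fixes f :: "real \<Rightarrow> complex" and c :: "real \<times> real \<Rightarrow> complex"
  assumes "finite F" "\<exists>p\<in>F. c p \<noteq> 0"
    and rel: "AE x in lborel. (\<Sum>p\<in>F. c p * MT (fst p) (snd p) f x) = 0"
  obtains I :: "(real \<times> real) set" and w u D A
  where "finite I" "I \<noteq> {}" "inj_on w I" "\<forall>i\<in>I. u i \<noteq> 0"
    and "finite D" "\<And>d. d \<in> D \<Longrightarrow> 0 < d" "0 \<le> A"
    and "AE v in lborel. \<forall>M\<ge>0. (\<forall>d\<in>D. norm (f (v + d)) \<le> M) \<longrightarrow>
           norm (trig_poly I w u v) * norm (f v) \<le> A * M"
proof -
  define F' where "F' = {p\<in>F. c p \<noteq> 0}"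
  define \<beta> where "\<beta> = Max (snd ` F')"
  define D where "D = (\<lambda>p. \<beta> - snd p) ` {p\<in>F'. snd p \<noteq> \<beta>}"
  have "finite F'" "F' \<noteq> {}" unfolding F'_def using assms(1,2) by auto
  then have "\<beta> \<in> snd ` F'" unfolding \<beta>_def by (intro Max_in) auto
  then have "{p\<in>F'. snd p = \<beta>} \<noteq> {}" by auto
  have "snd p \<le> \<beta>" if "p \<in> F'" for p
    unfolding \<beta>_def using that \<open>finite F'\<close> by (intro Max_ge) auto
  then have D_pos: "d \<in> D \<Longrightarrow> 0 < d" for d unfolding D_def by force
  have "(\<Sum>p\<in>F. c p * MT (fst p) (snd p) f x) = (\<Sum>p\<in>F'. c p * MT (fst p) (snd p) f x)" for x
    by (rule sum.mono_neutral_right) (auto simp: F'_def assms(1))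
  with rel have "AE x in lborel. (\<Sum>p\<in>F'. c p * MT (fst p) (snd p) f x) = 0" by simp
  then have "AE v in lborel. \<forall>l\<in>{\<beta>}. (\<Sum>p\<in>F'. c p * MT (fst p) (snd p) f (l + v)) = 0"
    by (rule AE_translates) simp
  then have rec: "AE v in lborel. \<forall>M\<ge>0. (\<forall>d\<in>D. norm (f (v + d)) \<le> M) \<longrightarrow>
      norm (trig_poly {p\<in>F'. snd p = \<beta>} (\<lambda>p. 2 * pi * fst p)
        (\<lambda>p. c p * exp (2 * pi * \<i> * complex_of_real (fst p * \<beta>))) v) * norm (f v)
      \<le> (\<Sum>p\<in>{p\<in>F'. snd p \<noteq> \<beta>}. norm (c p)) * M"
  proof eventually_elim
    case (elim v)
    show ?case
      by (intro allI impI norm_trig_poly_mult_le_of_vanishing_combination[OF \<open>finite F'\<close>])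
         (use elim in \<open>auto simp: D_def\<close>)
  qed
  have inj: "inj_on (\<lambda>p. 2 * pi * fst p) {p\<in>F'. snd p = \<beta>}"
    by (auto intro!: inj_onI prod_eqI)
  have nonzero: "\<forall>p\<in>{p\<in>F'. snd p = \<beta>}. c p * exp (2 * pi * \<i> * complex_of_real (fst p * \<beta>)) \<noteq> 0"
    by (simp add: F'_def)
  have "finite {p\<in>F'. snd p = \<beta>}" "finite D" "0 \<le> (\<Sum>p\<in>{p\<in>F'. snd p \<noteq> \<beta>}. norm (c p))"
    unfolding D_def using \<open>finite F'\<close> by (auto intro: sum_nonneg)
  then show ?thesis
    by (intro that[OF _ \<open>{p\<in>F'. snd p = \<beta>} \<noteq> {}\<close> inj nonzero _ _ _ rec] D_pos)
qed

lemma AE_of_AE_on_unit_intervals: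
  fixes P :: "real \<Rightarrow> bool"
  assumes "\<And>a::int. AE y in lborel. y \<in> {of_int a..of_int a + 1} \<longrightarrow> P y"
  shows "AE y in lborel. P y"
proof -
  have "AE y in lborel. \<forall>a\<in>(UNIV :: int set). y \<in> {of_int a..of_int a + 1} \<longrightarrow> P y"
    using assms by (subst AE_ball_countable) auto
  then show ?thesis
  proof eventually_elim
    case (elim y)
    have "y \<in> {of_int \<lfloor>y\<rfloor>..of_int \<lfloor>y\<rfloor> + 1}" by (simp add: less_imp_le)
    with elim show ?case by blast
  qed
qed

lemma eventually_norm_le_exp_of_decay:
  fixes f :: "real \<Rightarrow> complex"
  assumes "((\<lambda>x. norm (f x) * exp (c * x * ln x)) \<longlongrightarrow> 0) at_top"
  shows "\<forall>\<^sub>F z in at_top. norm (f z) \<le> exp (- c * z * ln z)"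
  using order_tendstoD(2)[OF assms zero_less_one]
  by eventually_elim (simp add: exp_minus field_simps)

lemma AE_eq_zero_of_recurrence:
  fixes f :: "real \<Rightarrow> complex"
  assumes decay: "\<And>c. c > 0 \<Longrightarrow> ((\<lambda>x. norm (f x) * exp (c * x * ln x)) \<longlongrightarrow> 0) at_top"
    and I: "finite I" "I \<noteq> {}" "inj_on w I" "\<forall>i\<in>I. u i \<noteq> 0"
    and "finite D" and D_pos: "\<And>d. d \<in> D \<Longrightarrow> 0 < d" and "0 \<le> A"
    and rec: "AE v in lborel. \<forall>M\<ge>0. (\<forall>d\<in>D. norm (f (v + d)) \<le> M) \<longrightarrow>
                norm (trig_poly I w u v) * norm (f v) \<le> A * M"
  shows "AE v in lborel. f v = 0"
proof (rule AE_of_AE_on_unit_intervals)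
  fix a :: int
  obtain C \<alpha> where "0 < \<alpha>" "0 \<le> C" and est: "sublevel_estimate (trig_poly I w u) C \<alpha>"
    using trig_poly_sublevel_estimate[OF I] by blast
  define L where "L = bounded_combinations D"
  define K where "K = (real (card D) + 1) / \<alpha>"
  define \<delta> where "\<delta> = (if D = {} then 1 else Min D)"
  have "\<delta> > 0" unfolding \<delta>_def using \<open>finite D\<close> D_pos by auto
  have dmin: "\<delta> \<le> d" if "d \<in> D" for d unfolding \<delta>_def using \<open>finite D\<close> that by auto
  have "0 \<le> K" unfolding K_def using \<open>0 < \<alpha>\<close> by simp
  have decay': "\<forall>\<^sub>F z in at_top. norm (f z) \<le> exp (- (4 * (K + 1) / \<delta>) * z * ln z)"
    using \<open>\<delta> > 0\<close> \<open>0 \<le> K\<close> by (intro eventually_norm_le_exp_of_decay decay) simp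
  have "countable (\<Union>m. L m)"
    unfolding L_def using \<open>finite D\<close>
    by (intro countable_UN[OF countableI_type] countable_finite finite_bounded_combinations)
  with rec have rec_translates: "AE y in lborel. \<forall>l\<in>(\<Union>m. L m). \<forall>M\<ge>0.
      (\<forall>d\<in>D. norm (f (l + y + d)) \<le> M) \<longrightarrow> norm (trig_poly I w u (l + y)) * norm (f (l + y)) \<le> A * M"
    by (rule AE_translates)
  have "AE y in lborel. y \<in> {of_int a..of_int a + 1} \<longrightarrow>
      (\<exists>\<^sub>F m in sequentially. \<forall>l\<in>L m. real m powr - K \<le> norm (trig_poly I w u (l + y)))"
    unfolding K_def L_def using \<open>finite D\<close> \<open>0 < \<alpha>\<close> \<open>0 \<le> C\<close>
    by (intro AE_frequently_large_on_translates[OF continuous_on_trig_poly est]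
        finite_bounded_combinations card_bounded_combinations_le)
  with rec_translates show "AE y in lborel. y \<in> {of_int a..of_int a + 1} \<longrightarrow> f y = 0"
  proof eventually_elim
    case (elim y)
    have "l + d \<in> L (Suc j)" if "l \<in> L j" "d \<in> D" for j l d
      using that unfolding L_def by (rule add_in_bounded_combinations[OF \<open>finite D\<close>])
    moreover have "L j \<subseteq> L m" if "j \<le> m" for j m
      unfolding L_def using that by (rule bounded_combinations_mono)
    moreover have "0 \<in> L 0" unfolding L_def by (rule zero_in_bounded_combinations)
    ultimately show ?case
      using elim \<open>\<delta> > 0\<close> dmin \<open>0 \<le> A\<close> \<open>0 \<le> K\<close> decay'
      by (blast intro: eq_zero_of_recurrence[where L=L and D=D and P="trig_poly I w u"])
  qed
qed

theorem theorem1p1: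
  fixes f :: "real \<Rightarrow> complex"
  assumes "f \<in> borel_measurable lebesgue"
    and "\<not> (AE x in lebesgue. f x = 0)"
    and "\<And>c::real. c > 0 \<Longrightarrow>
           ((\<lambda>x. norm (f x) * exp (c * x * ln x)) \<longlongrightarrow> 0) at_top"
  shows "gabor_lin_indep f UNIV"
  unfolding gabor_lin_indep_def
proof (intro allI impI notI)
  fix F c assume F: "finite F \<and> F \<subseteq> UNIV \<and> (\<exists>p\<in>F. c p \<noteq> 0)"
    and "AE x in lebesgue. (\<Sum>p\<in>F. c p * MT (fst p) (snd p) f x) = 0"
  then have rel: "AE x in lborel. (\<Sum>p\<in>F. c p * MT (fst p) (snd p) f x) = 0"
    by (simp add: AE_completion_iff)
  from F have "finite F" "\<exists>p\<in>F. c p \<noteq> 0" by auto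
  then obtain I :: "(real \<times> real) set" and w u D A
    where I: "finite I" "I \<noteq> {}" "inj_on w I" "\<forall>i\<in>I. u i \<noteq> 0"
      and D: "finite D" "\<And>d. d \<in> D \<Longrightarrow> 0 < d" "0 \<le> A"
      and recurrence: "AE v in lborel. \<forall>M\<ge>0. (\<forall>d\<in>D. norm (f (v + d)) \<le> M) \<longrightarrow>
             norm (trig_poly I w u v) * norm (f v) \<le> A * M"
    using rel by (rule gabor_relation_recurrence) blast
  have "AE v in lborel. f v = 0"
    using AE_eq_zero_of_recurrence[OF assms(3) I D recurrence] .
  then show False using assms(2) by (auto dest: AE_completion)
qed

end
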